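(* Let $f$ be a convergent power series in $\mathbf z=(z_1,\dots,z_n)$ with $f(\mathbf 0)=0$ and let $f_i=\partial f/\partial z_i$. (1) If $P\sim_J Q$ then $P\sim Q$. Conversely, if $P\sim Q$ and the face function $f_P$ contains all $n$ variables $z_1,\dots,z_n$, then $P\sim_J Q$. (2) A strictly positive weight vector $P$ is a vertex of $\Gamma^*(f)$ if and only if $\dim\Delta(P,f)=n-1$, and it is a vertex of $\Gamma_J^*(f)$ if and only if $\dim\big(\Delta(P,f)+\sum_{i=1}^n\Delta(P,f_i)\big)=n-1$, where the sum is the Minkowski sum.
   Context: For a convergent power series $g=\sum c_\nu\mathbf z^\nu$, the Newton diagram $\Gamma_+(g)$ is the convex hull of $\bigcup_{c_\nu\ne0}(\nu+\mathbb R_{\ge0}^n)$. For a weight vector $P=(p_1,\dots,p_n)\in\mathbb R_{\ge0}^n$, $d(P,g)=\min\{\sum_ip_i\nu_i:\nu\in\Gamma_+(g)\}$, $\Delta(P,g)$ is the face of $\Gamma_+(g)$ where this minimum is attained, and $g_P=\sum_{\nu\in\Delta(P,g)}c_\nu\mathbf z^\nu$. $P$ is strictly positive if all $p_i>0$. Two weight vectors are equivalent, $P\sim Q$, if $\Delta(P,f)=\Delta(Q,f)$; the equivalence classes give a rational polyhedral cone subdivision $\Gamma^*(f)$ of $\mathbb R_{\ge0}^n$ (the dual Newton diagram). They are Jacobian equivalent, $P\sim_JQ$, if $\Delta(P,f)=\Delta(Q,f)$ and $\Delta(P,f_i)=\Delta(Q,f_i)$ for all $i=1,\dots,n$; the classes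 give a finer cone subdivision $\Gamma_J^*(f)$. A vertex of a subdivision is a non-zero weight vector spanning a one-dimensional cone of it. *)

theory Defs
  imports "HOL-Analysis.Analysis"
begin

text \<open>A (formal) power series in the variables z_i, i :: 'n (a finite index type,
  n = CARD('n)), is given by its coefficient function on exponent vectors.\<close>

type_synonym 'n pseries = "('n \<Rightarrow> nat) \<Rightarrow> complex"

definition convergent_ps :: "('n::finite) pseries \<Rightarrow> bool" where
  "convergent_ps g \<longleftrightarrow>
     (\<exists>r>0. (\<lambda>\<nu>. norm (g \<nu>) * r ^ (\<Sum>i\<in>UNIV. \<nu> i)) summable_on UNIV)"

definition expo :: "('n::finite \<Rightarrow> nat) \<Rightarrow> real^'n" where
  "expo \<nu> = (\<chi> i. real (\<nu> i))"

definition nonneg_weight :: "real^'n::finite \<Rightarrow> bool" where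
  "nonneg_weight P \<longleftrightarrow> (\<forall>i. 0 \<le> P $ i)"

definition strictly_positive :: "real^'n::finite \<Rightarrow> bool" where
  "strictly_positive P \<longleftrightarrow> (\<forall>i. 0 < P $ i)"

definition newton_diagram :: "('n::finite) pseries \<Rightarrow> (real^'n) set" where
  "newton_diagram g =
     convex hull (\<Union>\<nu>\<in>{\<nu>. g \<nu> \<noteq> 0}. {expo \<nu> + x | x. \<forall>i. 0 \<le> x $ i})"

definition face :: "real^'n \<Rightarrow> ('n::finite) pseries \<Rightarrow> (real^'n) set" where
  "face P g = {x \<in> newton_diagram g. \<forall>y\<in>newton_diagram g. P \<bullet> x \<le> P \<bullet> y}"

definition face_fun :: "real^'n \<Rightarrow> ('n::finite) pseries \<Rightarrow> ('n::finite) pseries" where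
  "face_fun P g \<nu> = (if expo \<nu> \<in> face P g then g \<nu> else 0)"

definition pderiv_ps :: "'n \<Rightarrow> ('n::finite) pseries \<Rightarrow> 'n pseries" where
  "pderiv_ps i g \<nu> = of_nat (\<nu> i + 1) * g (\<nu>(i := \<nu> i + 1))"

definition weight_equiv :: "('n::finite) pseries \<Rightarrow> real^'n \<Rightarrow> real^'n \<Rightarrow> bool" where
  "weight_equiv f P Q \<longleftrightarrow> face P f = face Q f"

definition jacobian_equiv :: "('n::finite) pseries \<Rightarrow> real^'n \<Rightarrow> real^'n \<Rightarrow> bool" where
  "jacobian_equiv f P Q \<longleftrightarrow>
     face P f = face Q f \<and> (\<forall>i. face P (pderiv_ps i f) = face Q (pderiv_ps i f))"

text \<open>Equivalence class of Q in the nonnegative orthant; the cones of the subdivision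
  are the closures of these classes.\<close>
definition equiv_class :: "(real^'n \<Rightarrow> real^'n \<Rightarrow> bool) \<Rightarrow> real^'n \<Rightarrow> (real^'n::finite) set" where
  "equiv_class R Q = {S. nonneg_weight S \<and> R S Q}"

definition subdivision_vertex :: "(real^'n \<Rightarrow> real^'n \<Rightarrow> bool) \<Rightarrow> real^'n::finite \<Rightarrow> bool" where
  "subdivision_vertex R P \<longleftrightarrow> P \<noteq> 0 \<and> nonneg_weight P \<and>
     (\<exists>Q. nonneg_weight Q \<and> closure (equiv_class R Q) = {t *\<^sub>R P | t. 0 \<le> t})"

definition jacobian_face_sum :: "real^'n \<Rightarrow> ('n::finite) pseries \<Rightarrow> (real^'n) set" where
  "jacobian_face_sum P f =
     {x + (\<Sum>i\<in>UNIV. y i) | x y. x \<in> face P f \<and> (\<forall>i. y i \<in> face P (pderiv_ps i f))}"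

end

theory Submission
  imports Defs
begin

text \<open>
  For a strictly positive weight P the face Delta(P,g) is the convex hull of the exponents of g of
  minimal P-weight, and for weights S close to P this set of exponents can only shrink. Hence, if z
  is orthogonal to all differences of such exponents (for f, or for f and all f_i), then P + t z has
  the same faces as P for small t > 0, while every weight equivalent to P is orthogonal to these
  differences. So the class of P is the open ray through P exactly when the differences span the
  hyperplane orthogonal to P, i.e. span a space of dimension n - 1; and that dimension is the affine
  dimension of Delta(P,f), resp. of the Minkowski sum Delta(P,f) + sum_i Delta(P,f_i). If some f_i
  vanishes, the sum is empty and all exponents of f lie in z_i = 0, so the differences are orthogonal
  to both P and e_i and neither side holds.

  Part (1): once a monomial of f_P contains z_i, Delta(P,f_i) is determined by Delta(P,f), as the set
  of points x of Gamma_+(f_i) with x + e_i in Delta(P,f).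
\<close>

lemma inner_expo: "S \<bullet> expo \<nu> = (\<Sum>i\<in>UNIV. S$i * real (\<nu> i))"
  by (simp add: inner_vec_def expo_def)

lemma inner_nonneg_cart:
  fixes S x :: "real^'n::finite"
  shows "nonneg_weight S \<Longrightarrow> (\<forall>i. 0 \<le> x$i) \<Longrightarrow> 0 \<le> S \<bullet> x"
  by (simp add: nonneg_weight_def inner_vec_def sum_nonneg)

lemma strictly_positive_imp_nonneg_weight: "strictly_positive P \<Longrightarrow> nonneg_weight P"
  by (simp add: strictly_positive_def nonneg_weight_def less_imp_le)

lemma expo_fun_upd_Suc: "expo (\<mu>(i := \<mu> i + 1)) = axis i 1 + expo \<mu>"
  by (simp add: vec_eq_iff expo_def axis_def)

definition newton_generators :: "('n::finite) pseries \<Rightarrow> (real^'n) set" where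
  "newton_generators g = {expo \<nu> + x | \<nu> x. g \<nu> \<noteq> 0 \<and> (\<forall>i. 0 \<le> x $ i)}"

lemma newton_diagram_eq_hull: "newton_diagram g = convex hull newton_generators g"
  unfolding newton_diagram_def newton_generators_def
    by (rule arg_cong[where f = "\<lambda>U. convex hull U"]) blast

lemma expo_in_newton_generators: "g \<nu> \<noteq> 0 \<Longrightarrow> expo \<nu> \<in> newton_generators g"
  unfolding newton_generators_def by (intro CollectI exI[of _ \<nu>] exI[of _ 0]) simp

lemma expo_in_newton_diagram: "g \<nu> \<noteq> 0 \<Longrightarrow> expo \<nu> \<in> newton_diagram g"
  unfolding newton_diagram_eq_hull by (intro hull_inc expo_in_newton_generators)

lemma newton_diagram_translate:
  assumes cover: "\<And>\<nu>. g \<nu> \<noteq> 0 \<Longrightarrow> \<exists>\<mu>. h \<mu> \<noteq> 0 \<and> (\<forall>i. expo \<mu> $ i \<le> c $ i + expo \<nu> $ i)"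
    and x: "x \<in> newton_diagram g"
  shows "c + x \<in> newton_diagram h"
proof -
  have "(+) c ` newton_generators g \<subseteq> newton_generators h"
  proof
    fix u assume "u \<in> (+) c ` newton_generators g"
    then obtain \<nu> z where u: "u = c + (expo \<nu> + z)" "g \<nu> \<noteq> 0" "\<forall>i. 0 \<le> z$i"
      unfolding newton_generators_def by blast
    obtain \<mu> where \<mu>: "h \<mu> \<noteq> 0" "\<forall>i. expo \<mu> $ i \<le> c $ i + expo \<nu> $ i" using cover[OF u(2)] by blast
    have "u = expo \<mu> + (c + expo \<nu> - expo \<mu> + z)" using u(1) by (simp add: algebra_simps)
    moreover have "\<forall>i. 0 \<le> (c + expo \<nu> - expo \<mu> + z) $ i" using \<mu>(2) u(3) by simp
    ultimately show "u \<in> newton_generators h" using \<mu>(1) unfolding newton_generators_def by blast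
  qed
  hence "convex hull ((+) c ` newton_generators g) \<subseteq> convex hull newton_generators h"
    by (rule hull_mono)
  hence "(+) c ` newton_diagram g \<subseteq> newton_diagram h"
    by (simp add: newton_diagram_eq_hull convex_hull_translation)
  thus ?thesis using x by blast
qed

lemma newton_diagram_add_nonneg:
  "y \<in> newton_diagram g \<Longrightarrow> \<forall>i. 0 \<le> x$i \<Longrightarrow> x + y \<in> newton_diagram g"
  by (rule newton_diagram_translate) auto

lemma newton_diagram_pderiv:
  assumes "x \<in> newton_diagram (pderiv_ps i f)"
  shows "axis i 1 + x \<in> newton_diagram f"
proof (rule newton_diagram_translate[OF _ assms])
  fix \<nu> assume "pderiv_ps i f \<nu> \<noteq> 0"
  hence "f (\<nu>(i := \<nu> i + 1)) \<noteq> 0" by (simp add: pderiv_ps_def)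
  thus "\<exists>\<mu>. f \<mu> \<noteq> 0 \<and> (\<forall>j. expo \<mu> $ j \<le> axis i 1 $ j + expo \<nu> $ j)"
    using expo_fun_upd_Suc[of \<nu> i] by (intro exI[of _ "\<nu>(i := \<nu> i + 1)"]) simp
qed

lemma newton_diagram_inner_lower_bound:
  assumes "\<And>\<nu>. g \<nu> \<noteq> 0 \<Longrightarrow> c \<le> S \<bullet> expo \<nu>" "nonneg_weight S" "y \<in> newton_diagram g"
  shows "c \<le> S \<bullet> y"
proof -
  have "newton_generators g \<subseteq> {y. c \<le> S \<bullet> y}"
    using assms(1) inner_nonneg_cart[OF assms(2)]
    by (fastforce simp: newton_generators_def inner_add_right)
  hence "newton_diagram g \<subseteq> {y. c \<le> S \<bullet> y}"
    unfolding newton_diagram_eq_hull by (rule hull_minimal) (simp add: convex_halfspace_ge)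
  thus ?thesis using assms(3) by blast
qed

lemma face_zero_series: "face S (\<lambda>_. 0) = {}"
  by (simp add: face_def newton_diagram_eq_hull newton_generators_def)

lemma face_scaleR: "0 < t \<Longrightarrow> face (t *\<^sub>R P) g = face P g"
  unfolding face_def by auto

lemma pderiv_ps_fun_upd_pred:
  assumes "0 < \<nu> i"
  shows "pderiv_ps i f (\<nu>(i := \<nu> i - 1)) = of_nat (\<nu> i) * f \<nu>"
proof -
  have "(\<nu>(i := \<nu> i - 1))(i := \<nu> i - 1 + 1) = \<nu>" using assms by auto
  thus ?thesis using assms by (simp add: pderiv_ps_def)
qed

lemma face_pderiv_ps:
  assumes "f \<nu> \<noteq> 0" "expo \<nu> \<in> face P f" "0 < \<nu> i"
  shows "face P (pderiv_ps i f) = {x \<in> newton_diagram (pderiv_ps i f). axis i 1 + x \<in> face P f}"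
proof -
  define \<mu> where "\<mu> = \<nu>(i := \<nu> i - 1)"
  have "pderiv_ps i f \<mu> \<noteq> 0"
    using assms pderiv_ps_fun_upd_pred[of \<nu> i f, OF assms(3)] by (simp add: \<mu>_def)
  hence \<mu>_in: "expo \<mu> \<in> newton_diagram (pderiv_ps i f)" by (rule expo_in_newton_diagram)
  have "\<nu> = \<mu>(i := \<mu> i + 1)" using assms(3) by (auto simp: \<mu>_def)
  hence \<nu>_eq: "expo \<nu> = axis i 1 + expo \<mu>" by (metis expo_fun_upd_Suc)
  show ?thesis
  proof (intro set_eqI iffI)
    fix x assume x: "x \<in> face P (pderiv_ps i f)"
    hence x_in: "x \<in> newton_diagram (pderiv_ps i f)" and "P \<bullet> x \<le> P \<bullet> expo \<mu>"
      using \<mu>_in unfolding face_def by auto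
    hence "P \<bullet> (axis i 1 + x) \<le> P \<bullet> expo \<nu>" using \<nu>_eq by (simp add: inner_add_right)
    moreover have "P \<bullet> expo \<nu> \<le> P \<bullet> z" if "z \<in> newton_diagram f" for z
      using assms(2) that unfolding face_def by auto
    ultimately show "x \<in> {x \<in> newton_diagram (pderiv_ps i f). axis i 1 + x \<in> face P f}"
      using x_in newton_diagram_pderiv[OF x_in] by (force simp: face_def)
  next
    fix x assume "x \<in> {x \<in> newton_diagram (pderiv_ps i f). axis i 1 + x \<in> face P f}"
    thus "x \<in> face P (pderiv_ps i f)"
      by (auto simp: face_def inner_add_right dest!: newton_diagram_pderiv)
  qed
qed

lemma weight_equiv_imp_jacobian_equiv:
  assumes "weight_equiv f P Q" and "\<forall>i. \<exists>\<nu>. face_fun P f \<nu> \<noteq> 0 \<and> 0 < \<nu> i"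
  shows "jacobian_equiv f P Q"
  unfolding jacobian_equiv_def
proof (intro conjI allI)
  show "face P f = face Q f" using assms(1) by (simp add: weight_equiv_def)
  fix i
  obtain \<nu> where "face_fun P f \<nu> \<noteq> 0" "0 < \<nu> i" using assms(2) by blast
  hence "f \<nu> \<noteq> 0" "expo \<nu> \<in> face P f" "expo \<nu> \<in> face Q f"
    using assms(1) by (auto simp: face_fun_def weight_equiv_def split: if_splits)
  thus "face P (pderiv_ps i f) = face Q (pderiv_ps i f)"
    using face_pderiv_ps[of f \<nu> P i] face_pderiv_ps[of f \<nu> Q i] assms(1) \<open>0 < \<nu> i\<close>
    by (simp add: weight_equiv_def)
qed

text \<open>For strictly positive S this is the support of the face function g_S.\<close>

definition min_support :: "real^'n \<Rightarrow> ('n::finite) pseries \<Rightarrow> ('n \<Rightarrow> nat) set" where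
  "min_support S g = {\<nu>. g \<nu> \<noteq> 0 \<and> (\<forall>\<mu>. g \<mu> \<noteq> 0 \<longrightarrow> S \<bullet> expo \<nu> \<le> S \<bullet> expo \<mu>)}"

lemma min_support_weight_eq:
  "a \<in> min_support S g \<Longrightarrow> b \<in> min_support S g \<Longrightarrow> S \<bullet> expo a = S \<bullet> expo b"
  unfolding min_support_def by (auto intro: order.antisym)

lemma finite_weight_sublevel:
  assumes "strictly_positive S"
  shows "finite {\<nu>::'n::finite \<Rightarrow> nat. S \<bullet> expo \<nu> \<le> c}"
proof -
  define B where "B i = nat \<lceil>c / S$i\<rceil>" for i
  have "\<nu> i \<le> B i" if "S \<bullet> expo \<nu> \<le> c" for \<nu> :: "'n \<Rightarrow> nat" and i
  proof -
    have "S$i * real (\<nu> i) \<le> (\<Sum>i\<in>UNIV. S$i * real (\<nu> i))"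
      by (rule member_le_sum) (use assms in \<open>auto simp: strictly_positive_def less_imp_le\<close>)
    hence "S$i * real (\<nu> i) \<le> c" using that by (simp add: inner_expo)
    hence "real (\<nu> i) \<le> c / S$i" using assms by (simp add: strictly_positive_def field_simps)
    thus ?thesis unfolding B_def by linarith
  qed
  hence "{\<nu>. S \<bullet> expo \<nu> \<le> c} \<subseteq> PiE UNIV (\<lambda>i. {..B i})"
    by (auto simp: PiE_iff)
  thus ?thesis by (rule finite_subset) (simp add: finite_PiE)
qed

lemma min_support_nonempty:
  assumes "strictly_positive S" "g \<nu>\<^sub>0 \<noteq> 0"
  shows "min_support S g \<noteq> {}"
proof -
  define A where "A = {\<nu>. g \<nu> \<noteq> 0 \<and> S \<bullet> expo \<nu> \<le> S \<bullet> expo \<nu>\<^sub>0}"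
  have "finite A"
    using finite_weight_sublevel[OF assms(1)] by (rule rev_finite_subset) (auto simp: A_def)
  moreover have "\<nu>\<^sub>0 \<in> A" using assms(2) by (simp add: A_def)
  ultimately obtain m where "is_arg_min (\<lambda>\<nu>. S \<bullet> expo \<nu>) (\<lambda>\<nu>. \<nu> \<in> A) m"
    using ex_is_arg_min_if_finite by blast
  hence "m \<in> min_support S g"
    unfolding is_arg_min_linorder min_support_def A_def by force
  thus ?thesis by blast
qed

lemma in_convex_hull_of_Un_level:
  fixes S :: "'a::euclidean_space"
  assumes x: "x \<in> convex hull (A \<union> B)" "S \<bullet> x \<le> d"
    and A: "\<And>a. a \<in> A \<Longrightarrow> S \<bullet> a = d" and B: "\<And>b. b \<in> B \<Longrightarrow> d < S \<bullet> b"
  shows "x \<in> convex hull A"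
proof -
  have hull_A: "convex hull A \<subseteq> {y. S \<bullet> y = d}"
    using A by (intro hull_minimal) (auto simp: convex_hyperplane)
  have hull_B: "convex hull B \<subseteq> {y. d < S \<bullet> y}"
    using B by (intro hull_minimal) (auto simp: convex_halfspace_gt)
  consider "A = {}" | "B = {}" | "A \<noteq> {}" "B \<noteq> {}" by blast
  thus ?thesis
  proof cases
    case 1 thus ?thesis using x hull_B by auto
  next
    case 2 thus ?thesis using x by simp
  next
    case 3
    have "x \<in> convex hull (convex hull A \<union> convex hull B)"
      using x(1) by (metis hull_Un_left hull_Un_right)
    then obtain u v s t where uv: "x = u *\<^sub>R s + v *\<^sub>R t" "0 \<le> u" "0 \<le> v" "u + v = 1"
        "s \<in> convex hull A" "t \<in> convex hull B"
      using 3 by (subst (asm) convex_hull_union_two) auto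
    have "S \<bullet> s = d" using uv(5) hull_A by blast
    hence Sx: "S \<bullet> x = u * d + v * (S \<bullet> t)" using uv(1) by (simp add: inner_add_right)
    have d_split: "d = u * d + v * d" using uv(4) by (metis distrib_right mult_1)
    have "d < S \<bullet> t" using uv(6) hull_B by blast
    have "v = 0"
    proof (rule ccontr)
      assume "v \<noteq> 0"
      hence "v * d < v * (S \<bullet> t)" using uv(3) \<open>d < S \<bullet> t\<close> by simp
      thus False using Sx d_split x(2) by linarith
    qed
    thus ?thesis using uv by simp
  qed
qed

lemma generator_weight_gt_min_support:
  assumes sp: "strictly_positive S" and m: "m \<in> min_support S g"
    and "g \<nu> \<noteq> 0" "\<forall>i. 0 \<le> z$i" "expo \<nu> + z \<notin> expo ` min_support S g"
  shows "S \<bullet> expo m < S \<bullet> (expo \<nu> + z)"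
proof (cases "\<nu> \<in> min_support S g")
  case True
  then obtain i where "z$i \<noteq> 0" using assms(5)
    by (metis add.right_neutral image_eqI vec_eq_iff zero_index)
  hence "0 < S \<bullet> z"
    unfolding inner_vec_def using sp assms(4)
    by (intro sum_pos2[of _ i]) (auto simp: strictly_positive_def order_less_le)
  thus ?thesis using min_support_weight_eq[OF m True] by (simp add: inner_add_right)
next
  case False
  then obtain \<mu> where "g \<mu> \<noteq> 0" "S \<bullet> expo \<mu> < S \<bullet> expo \<nu>"
    using assms(3) unfolding min_support_def by force
  moreover have "S \<bullet> expo m \<le> S \<bullet> expo \<mu>" using m \<open>g \<mu> \<noteq> 0\<close> by (simp add: min_support_def)
  moreover have "0 \<le> S \<bullet> z"
    using inner_nonneg_cart[OF strictly_positive_imp_nonneg_weight[OF sp] assms(4)] .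
  ultimately show ?thesis by (simp add: inner_add_right)
qed

lemma face_strictly_positive:
  assumes sp: "strictly_positive S"
  shows "face S g = convex hull (expo ` min_support S g)"
proof (cases "g = (\<lambda>_. 0)")
  case True thus ?thesis by (simp add: face_zero_series min_support_def)
next
  case False
  then obtain m where m: "m \<in> min_support S g" using min_support_nonempty[OF sp] by fastforce
  define d where "d = S \<bullet> expo m"
  define E where "E = expo ` min_support S g"
  have E_level: "S \<bullet> e = d" if "e \<in> E" for e
    using that m min_support_weight_eq by (auto simp: E_def d_def)
  have "d \<le> S \<bullet> expo \<nu>" if "g \<nu> \<noteq> 0" for \<nu>
    using m that by (simp add: min_support_def d_def)
  hence d_le: "d \<le> S \<bullet> y" if "y \<in> newton_diagram g" for y
    using newton_diagram_inner_lower_bound strictly_positive_imp_nonneg_weight[OF sp] that by blast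
  have E_gen: "E \<subseteq> newton_generators g"
    using expo_in_newton_generators by (auto simp: E_def min_support_def)
  have "y \<in> face S g" if "y \<in> convex hull E" for y
  proof -
    have "y \<in> newton_diagram g"
      using hull_mono[OF E_gen] that unfolding newton_diagram_eq_hull by blast
    moreover have "S \<bullet> y = d"
      using hull_minimal[of E "{y. S \<bullet> y = d}" convex] E_level that
        by (auto simp: convex_hyperplane)
    ultimately show ?thesis using d_le by (simp add: face_def)
  qed
  moreover have "x \<in> convex hull E" if x: "x \<in> face S g" for x
  proof (rule in_convex_hull_of_Un_level)
    have "expo m \<in> newton_diagram g" using m by (simp add: min_support_def expo_in_newton_diagram)
    thus "S \<bullet> x \<le> d" using x by (simp add: face_def d_def)
    have "newton_generators g = E \<union> (newton_generators g - E)" using E_gen by blast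
    thus "x \<in> convex hull (E \<union> (newton_generators g - E))"
      using x by (simp add: face_def newton_diagram_eq_hull)
    show "S \<bullet> e = d" if "e \<in> E" for e using E_level that .
    show "d < S \<bullet> u" if u: "u \<in> newton_generators g - E" for u
    proof -
      obtain \<nu> z where "u = expo \<nu> + z" "g \<nu> \<noteq> 0" "\<forall>i. 0 \<le> z$i"
        using u unfolding newton_generators_def by blast
      thus ?thesis using u generator_weight_gt_min_support[OF sp m] by (simp add: d_def E_def)
    qed
  qed
  ultimately show ?thesis unfolding E_def by blast
qed

lemma inner_expo_mono: "(\<And>i. P$i \<le> S$i) \<Longrightarrow> P \<bullet> expo \<nu> \<le> S \<bullet> expo \<nu>"
  unfolding inner_expo by (intro sum_mono mult_right_mono) auto

lemma eventually_nhds_half_below: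
  fixes P :: "real^'n::finite"
  assumes "strictly_positive P"
  shows "\<forall>\<^sub>F S in nhds P. \<forall>i. P$i / 2 < S$i"
  using assms unfolding strictly_positive_def
  by (intro eventually_all_finite allI order_tendstoD(1)[OF tendsto_vec_nth[OF filterlim_ident]])
     simp

lemma eventually_nhds_strictly_positive:
  fixes P :: "real^'n::finite"
  assumes "strictly_positive P"
  shows "\<forall>\<^sub>F S in nhds P. strictly_positive S"
  using eventually_nhds_half_below[OF assms]
proof (rule eventually_mono)
  fix S :: "real^'n" assume "\<forall>i. P$i / 2 < S$i"
  moreover have "\<forall>i. 0 < P$i / 2" using assms by (simp add: strictly_positive_def)
  ultimately show "strictly_positive S" unfolding strictly_positive_def by (metis less_trans)
qed

text \<open>
  Exponents of large P-weight are excluded by S \<ge> P/2; the finitely many others are separated from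
  m by continuity in S.
\<close>

lemma min_support_subset_of_separation:
  assumes m: "m \<in> min_support P g" and half: "\<And>i. P$i / 2 \<le> S$i"
    and near: "S \<bullet> expo m < P \<bullet> expo m + 1"
    and sep: "\<And>\<nu>. g \<nu> \<noteq> 0 \<Longrightarrow> \<nu> \<notin> min_support P g \<Longrightarrow> P \<bullet> expo \<nu> \<le> 2 * (P \<bullet> expo m + 1)
      \<Longrightarrow> S \<bullet> expo m < S \<bullet> expo \<nu>"
  shows "min_support S g \<subseteq> min_support P g"
proof
  fix \<nu> assume \<nu>: "\<nu> \<in> min_support S g"
  show "\<nu> \<in> min_support P g"
  proof (rule ccontr)
    assume \<nu>_P: "\<nu> \<notin> min_support P g"
    have "g \<nu> \<noteq> 0" and \<nu>_m: "S \<bullet> expo \<nu> \<le> S \<bullet> expo m"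
      using \<nu> m by (auto simp: min_support_def)
    hence "2 * (P \<bullet> expo m + 1) < P \<bullet> expo \<nu>" using sep \<nu>_P by fastforce
    moreover have "P \<bullet> expo \<nu> / 2 \<le> S \<bullet> expo \<nu>"
      using inner_expo_mono[of "P /\<^sub>R 2" S \<nu>] half by simp
    ultimately show False using near \<nu>_m by argo
  qed
qed

lemma min_support_eventually_subset:
  assumes sp: "strictly_positive P"
  shows "\<forall>\<^sub>F S in nhds P. strictly_positive S \<and> min_support S g \<subseteq> min_support P g"
proof (cases "g = (\<lambda>_. 0)")
  case True
  show ?thesis
    using eventually_nhds_strictly_positive[OF sp]
      by (rule eventually_mono) (simp add: True min_support_def)
next
  case False
  then obtain m where m: "m \<in> min_support P g" using min_support_nonempty[OF sp] by fastforce
  define V where "V = {\<nu>. g \<nu> \<noteq> 0 \<and> \<nu> \<notin> min_support P g \<and> P \<bullet> expo \<nu> \<le> 2 * (P \<bullet> expo m + 1)}"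
  have "finite V" unfolding V_def using finite_weight_sublevel[OF sp]
    by (rule rev_finite_subset) blast
  have "\<forall>\<^sub>F S in nhds P. S \<bullet> expo m < P \<bullet> expo m + 1"
    by (rule order_tendstoD(2)[OF tendsto_inner[OF filterlim_ident tendsto_const]]) simp
  moreover have "\<forall>\<^sub>F S in nhds P. \<forall>\<nu>\<in>V. S \<bullet> expo m < S \<bullet> expo \<nu>"
  proof (rule eventually_ball_finite[OF \<open>finite V\<close>], rule ballI)
    fix \<nu> assume "\<nu> \<in> V"
    then obtain \<mu> where "g \<mu> \<noteq> 0" "P \<bullet> expo \<mu> < P \<bullet> expo \<nu>"
      unfolding V_def min_support_def by force
    hence "0 < P \<bullet> (expo \<nu> - expo m)" using m by (force simp: min_support_def inner_diff_right)
    hence "\<forall>\<^sub>F S in nhds P. 0 < S \<bullet> (expo \<nu> - expo m)"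
      by (rule order_tendstoD(1)[OF tendsto_inner[OF filterlim_ident tendsto_const]])
    thus "\<forall>\<^sub>F S in nhds P. S \<bullet> expo m < S \<bullet> expo \<nu>"
      by eventually_elim (simp add: inner_diff_right)
  qed
  ultimately show ?thesis
    using eventually_nhds_half_below[OF sp] eventually_nhds_strictly_positive[OF sp]
  proof eventually_elim
    case (elim S)
    have "min_support S g \<subseteq> min_support P g"
      by (rule min_support_subset_of_separation[OF m]) (use elim in \<open>auto simp: V_def less_imp_le\<close>)
    thus ?case using elim(4) by blast
  qed
qed

lemma min_support_eq_of_subset:
  assumes "strictly_positive S" "min_support S g \<subseteq> min_support P g"
    and "\<And>a b. a \<in> min_support P g \<Longrightarrow> b \<in> min_support P g \<Longrightarrow> S \<bullet> expo a = S \<bullet> expo b"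
  shows "min_support S g = min_support P g"
proof (cases "g = (\<lambda>_. 0)")
  case True thus ?thesis by (simp add: min_support_def)
next
  case False
  then obtain a where a: "a \<in> min_support S g" using min_support_nonempty[OF assms(1)] by fastforce
  have "b \<in> min_support S g" if "b \<in> min_support P g" for b
    using a assms(2) assms(3)[of b a] that unfolding min_support_def by auto
  thus ?thesis using assms(2) by blast
qed

text \<open>Its span is the linear space parallel to the faces Delta(P, gs k) and to their Minkowski sum.\<close>

definition face_directions :: "real^'n \<Rightarrow> ('k \<Rightarrow> ('n::finite) pseries) \<Rightarrow> (real^'n) set" where
  "face_directions P gs =
     (\<Union>k. {expo a - expo b | a b. a \<in> min_support P (gs k) \<and> b \<in> min_support P (gs k)})"

lemma inner_face_directions:
  assumes sp: "strictly_positive P" and faces: "\<And>k. face S (gs k) = face P (gs k)"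
    and x: "x \<in> face_directions P gs"
  shows "S \<bullet> x = 0"
proof -
  obtain k a b where ab: "x = expo a - expo b" "a \<in> min_support P (gs k)" "b \<in> min_support P (gs k)"
    using x unfolding face_directions_def by blast
  have "expo a \<in> face S (gs k)" "expo b \<in> face S (gs k)"
    using ab(2,3) by (auto simp: faces face_strictly_positive[OF sp] hull_inc)
  thus ?thesis unfolding ab(1) face_def by (auto simp: inner_diff_right intro: order.antisym)
qed

lemma perturbation_preserves_faces:
  fixes gs :: "'k::finite \<Rightarrow> ('n::finite) pseries"
  assumes sp: "strictly_positive P" and z: "\<And>x. x \<in> face_directions P gs \<Longrightarrow> z \<bullet> x = 0"
  obtains t where "0 < t" "strictly_positive (P + t *\<^sub>R z)"
    "\<And>k. face (P + t *\<^sub>R z) (gs k) = face P (gs k)"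
proof -
  have "((\<lambda>t. P + t *\<^sub>R z) \<longlongrightarrow> P + 0 *\<^sub>R z) (at_right 0)"
    by (intro tendsto_intros)
  hence "filterlim (\<lambda>t. P + t *\<^sub>R z) (nhds P) (at_right 0)" by simp
  moreover have "\<forall>\<^sub>F S in nhds P. \<forall>k.
      strictly_positive S \<and> min_support S (gs k) \<subseteq> min_support P (gs k)"
    by (intro eventually_all_finite allI min_support_eventually_subset[OF sp])
  ultimately have "\<forall>\<^sub>F t in at_right 0. \<forall>k. strictly_positive (P + t *\<^sub>R z)
      \<and> min_support (P + t *\<^sub>R z) (gs k) \<subseteq> min_support P (gs k)"
    unfolding filterlim_iff by blast
  then obtain t :: real where t: "0 < t" "strictly_positive (P + t *\<^sub>R z)"
      "\<And>k. min_support (P + t *\<^sub>R z) (gs k) \<subseteq> min_support P (gs k)"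
    using eventually_happens'[OF trivial_limit_at_right_real
        eventually_conj[OF eventually_at_right_less]]
    by blast
  have "min_support (P + t *\<^sub>R z) (gs k) = min_support P (gs k)" for k
  proof (rule min_support_eq_of_subset[OF t(2,3)])
    fix a b assume ab: "a \<in> min_support P (gs k)" "b \<in> min_support P (gs k)"
    hence "expo a - expo b \<in> face_directions P gs" unfolding face_directions_def by blast
    hence "z \<bullet> (expo a - expo b) = 0" by (rule z)
    moreover have "P \<bullet> expo a = P \<bullet> expo b" using ab by (rule min_support_weight_eq)
    ultimately show "(P + t *\<^sub>R z) \<bullet> expo a = (P + t *\<^sub>R z) \<bullet> expo b"
      by (simp add: inner_add_left inner_diff_right)
  qed
  thus thesis using that t(1,2)
    by (simp add: face_strictly_positive[OF t(2)] face_strictly_positive[OF sp])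
qed


text \<open>Both equivalences are of this form, for the families f and (f, f_1, ..., f_n).\<close>

definition faces_equiv :: "('k \<Rightarrow> ('n::finite) pseries) \<Rightarrow> real^'n \<Rightarrow> real^'n \<Rightarrow> bool" where
  "faces_equiv gs S Q \<longleftrightarrow> (\<forall>k. face S (gs k) = face Q (gs k))"

lemma face_eq_imp_strictly_positive:
  assumes sp: "strictly_positive P" and "g \<nu>\<^sub>0 \<noteq> 0" "nonneg_weight S" and eq: "face S g = face P g"
  shows "strictly_positive S"
  unfolding strictly_positive_def
proof
  fix i
  show "0 < S$i"
  proof (rule ccontr)
    assume "\<not> 0 < S$i"
    hence S_i: "S$i = 0" using assms(3) unfolding nonneg_weight_def by (metis order_le_less)
    obtain x where x: "x \<in> face S g"
      using min_support_nonempty[of P g \<nu>\<^sub>0, OF sp assms(2)] eq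
        by (fastforce simp: face_strictly_positive[OF sp] hull_inc)
    hence "axis i 1 + x \<in> newton_diagram g"
      by (intro newton_diagram_add_nonneg) (auto simp: face_def axis_def)
    moreover have "S \<bullet> (axis i 1 + x) = S \<bullet> x" using S_i by (simp add: inner_add_right inner_axis)
    ultimately have "axis i 1 + x \<in> face S g" using x by (simp add: face_def)
    hence "axis i 1 + x \<in> face P g" using eq by simp
    hence "P \<bullet> (axis i 1 + x) \<le> P \<bullet> x" using x eq by (auto simp: face_def)
    thus False using sp
      by (simp add: strictly_positive_def inner_add_right inner_axis not_le[symmetric])
  qed
qed

lemma face_eq_newton_diagram_imp_zero:
  assumes "g \<nu>\<^sub>0 \<noteq> 0" "nonneg_weight S" "face S g = newton_diagram g"
  shows "S = 0"
proof -
  have "S$i = 0" for i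
  proof -
    have \<nu>\<^sub>0_in: "expo \<nu>\<^sub>0 \<in> newton_diagram g" using assms(1) by (rule expo_in_newton_diagram)
    hence "axis i 1 + expo \<nu>\<^sub>0 \<in> newton_diagram g"
      by (rule newton_diagram_add_nonneg) (simp add: axis_def)
    hence "axis i 1 + expo \<nu>\<^sub>0 \<in> face S g" using assms(3) by simp
    hence "S \<bullet> (axis i 1 + expo \<nu>\<^sub>0) \<le> S \<bullet> expo \<nu>\<^sub>0" using \<nu>\<^sub>0_in by (auto simp: face_def)
    thus ?thesis using assms(2)
      by (simp add: nonneg_weight_def inner_add_right inner_axis order.antisym)
  qed
  thus ?thesis by (simp add: vec_eq_iff)
qed

lemma dim_add_le_of_orthogonal:
  fixes A B :: "(real^'n::finite) set"
  assumes "\<And>x y. x \<in> A \<Longrightarrow> y \<in> B \<Longrightarrow> x \<bullet> y = 0"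
  shows "dim A + dim B \<le> CARD('n)"
  using dim_orthogonal_sum[OF assms] dim_subset_UNIV_cart[of "A \<union> B"] by simp

lemma dim_pair:
  fixes P S :: "'a::euclidean_space"
  shows "P \<noteq> 0 \<Longrightarrow> S \<notin> span {P} \<Longrightarrow> dim {S, P} = 2"
  by (simp add: dim_insert dim_singleton)

lemma dim_face_directions_le:
  fixes gs :: "'k \<Rightarrow> ('n::finite) pseries"
  assumes "strictly_positive P"
  shows "dim (face_directions P gs) + 1 \<le> CARD('n)"
proof -
  have "P \<noteq> 0" using assms by (auto simp: strictly_positive_def)
  have "dim (face_directions P gs) + dim {P} \<le> CARD('n)"
    using inner_face_directions[OF assms, of P gs]
      by (intro dim_add_le_of_orthogonal) (auto simp: inner_commute)
  thus ?thesis using \<open>P \<noteq> 0\<close> by (simp add: dim_singleton)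
qed

lemma closure_open_ray:
  fixes P :: "'a::euclidean_space"
  assumes "P \<noteq> 0"
  shows "closure {t *\<^sub>R P | t. 0 < t} = {t *\<^sub>R P | t. 0 \<le> t}"
proof -
  have "closure ((\<lambda>t. t *\<^sub>R P) ` {0<..}) = (\<lambda>t. t *\<^sub>R P) ` closure {0<..}"
    using assms
    by (intro closure_injective_linear_image[symmetric] linear_scale_left) (auto simp: inj_on_def)
  moreover have "{t *\<^sub>R P | t. 0 < t} = (\<lambda>t. t *\<^sub>R P) ` {0<..}"
    and "{t *\<^sub>R P | t. 0 \<le> t} = (\<lambda>t. t *\<^sub>R P) ` {0..}"
    by auto
  ultimately show ?thesis by simp
qed

lemma vertex_imp_equiv_class_subset_ray:
  assumes "subdivision_vertex (faces_equiv gs) P" and "gs k\<^sub>0 \<nu>\<^sub>0 \<noteq> 0"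
  shows "equiv_class (faces_equiv gs) P \<subseteq> {t *\<^sub>R P | t. 0 \<le> t}"
proof -
  obtain Q where Q: "nonneg_weight Q"
    "closure (equiv_class (faces_equiv gs) Q) = {t *\<^sub>R P | t. 0 \<le> t}"
    using assms(1) unfolding subdivision_vertex_def by blast
  have "Q \<in> equiv_class (faces_equiv gs) Q" using Q(1)
    by (simp add: equiv_class_def faces_equiv_def)
  then obtain t where t: "Q = t *\<^sub>R P" "0 \<le> t" using Q(2) closure_subset by blast
  have "t \<noteq> 0"
  proof
    assume "t = 0"
    have "S = 0" if "S \<in> equiv_class (faces_equiv gs) Q" for S
    proof (rule face_eq_newton_diagram_imp_zero[of "gs k\<^sub>0" \<nu>\<^sub>0, OF assms(2)])
      show "nonneg_weight S" using that by (simp add: equiv_class_def)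
      have "face S (gs k\<^sub>0) = face Q (gs k\<^sub>0)" using that
        by (simp add: equiv_class_def faces_equiv_def)
      thus "face S (gs k\<^sub>0) = newton_diagram (gs k\<^sub>0)" using t(1) \<open>t = 0\<close> by (simp add: face_def)
    qed
    hence "equiv_class (faces_equiv gs) Q \<subseteq> {0}" by blast
    hence "closure (equiv_class (faces_equiv gs) Q) \<subseteq> {0}" by (rule closure_minimal) simp
    moreover have "P \<in> {t *\<^sub>R P | t. 0 \<le> t}" by (intro CollectI exI[of _ 1]) simp
    ultimately have "P = 0" using Q(2) by blast
    thus False using assms(1) by (simp add: subdivision_vertex_def)
  qed
  hence "0 < t" using t(2) by simp
  hence "equiv_class (faces_equiv gs) P = equiv_class (faces_equiv gs) Q"
    unfolding t(1) equiv_class_def faces_equiv_def by (simp add: face_scaleR)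
  thus ?thesis using Q(2) closure_subset by blast
qed

lemma equiv_class_eq_open_ray:
  fixes gs :: "'k \<Rightarrow> ('n::finite) pseries"
  assumes sp: "strictly_positive P" and "gs k\<^sub>0 \<nu>\<^sub>0 \<noteq> 0"
    and dim: "dim (face_directions P gs) + 1 = CARD('n)"
  shows "equiv_class (faces_equiv gs) P = {t *\<^sub>R P | t. 0 < t}"
proof (intro set_eqI iffI)
  fix S assume "S \<in> equiv_class (faces_equiv gs) P"
  hence nn: "nonneg_weight S" and faces: "\<And>k. face S (gs k) = face P (gs k)"
    by (auto simp: equiv_class_def faces_equiv_def)
  have "S \<in> span {P}"
  proof (rule ccontr)
    assume "S \<notin> span {P}"
    moreover have "P \<noteq> 0" using sp by (auto simp: strictly_positive_def)
    ultimately have "dim {S, P} = 2" by (rule dim_pair[rotated])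
    moreover have "dim (face_directions P gs) + dim {S, P} \<le> CARD('n)"
      using inner_face_directions[OF sp faces] inner_face_directions[OF sp, of P gs]
      by (intro dim_add_le_of_orthogonal) (auto simp: inner_commute)
    ultimately show False using dim by simp
  qed
  then obtain c where c: "S = c *\<^sub>R P" by (auto simp: span_singleton)
  fix i :: 'n
  have "strictly_positive S" using face_eq_imp_strictly_positive[OF sp assms(2) nn faces] .
  hence "0 < c * P$i" using c by (simp add: strictly_positive_def)
  moreover have "0 < P$i" using sp by (simp add: strictly_positive_def)
  ultimately have "0 < c" by (rule zero_less_mult_pos2)
  thus "S \<in> {t *\<^sub>R P | t. 0 < t}" using c by blast
next
  fix S assume "S \<in> {t *\<^sub>R P | t. 0 < t}"
  then obtain t where S: "S = t *\<^sub>R P" and "0 < t" by blast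
  hence "nonneg_weight S" using sp
    by (simp add: nonneg_weight_def strictly_positive_def less_imp_le)
  thus "S \<in> equiv_class (faces_equiv gs) P"
    by (simp add: equiv_class_def faces_equiv_def S face_scaleR[OF \<open>0 < t\<close>])
qed

lemma subdivision_vertex_imp_dim_face_directions:
  fixes gs :: "'k::finite \<Rightarrow> ('n::finite) pseries"
  assumes sp: "strictly_positive P" and g: "gs k\<^sub>0 \<nu>\<^sub>0 \<noteq> 0"
    and vertex: "subdivision_vertex (faces_equiv gs) P"
  shows "dim (face_directions P gs) + 1 = CARD('n)"
proof -
  have "\<not> dim (insert P (face_directions P gs)) < DIM(real^'n)"
  proof
    assume "dim (insert P (face_directions P gs)) < DIM(real^'n)"
    then obtain z where "z \<noteq> 0"
      and z: "\<And>y. y \<in> span (insert P (face_directions P gs)) \<Longrightarrow> orthogonal z y"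
      by (rule orthogonal_to_subspace_exists) blast
    have z_orth: "z \<bullet> y = 0" if "y \<in> insert P (face_directions P gs)" for y
      using z[OF span_base[OF that]] by (simp add: orthogonal_def)
    obtain t where t: "0 < t" "strictly_positive (P + t *\<^sub>R z)"
      "\<And>k. face (P + t *\<^sub>R z) (gs k) = face P (gs k)"
      using perturbation_preserves_faces[OF sp, of gs z] z_orth by blast
    have "P + t *\<^sub>R z \<in> equiv_class (faces_equiv gs) P"
      using t(2,3)
        by (simp add: equiv_class_def faces_equiv_def strictly_positive_imp_nonneg_weight)
    then obtain c where "P + t *\<^sub>R z = c *\<^sub>R P"
      using vertex_imp_equiv_class_subset_ray[OF vertex g] by blast
    hence "t *\<^sub>R z = (c - 1) *\<^sub>R P" by (simp add: algebra_simps)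
    hence "z \<bullet> (t *\<^sub>R z) = z \<bullet> ((c - 1) *\<^sub>R P)" by simp
    hence "t * (z \<bullet> z) = 0" using z_orth[of P] by simp
    thus False using \<open>0 < t\<close> \<open>z \<noteq> 0\<close> by simp
  qed
  thus ?thesis
    using dim_face_directions_le[OF sp, of gs] dim_insert[of P "face_directions P gs"]
    by (simp split: if_splits)
qed

lemma subdivision_vertex_faces_equiv_iff:
  fixes gs :: "'k::finite \<Rightarrow> ('n::finite) pseries"
  assumes sp: "strictly_positive P" and g: "gs k\<^sub>0 \<nu>\<^sub>0 \<noteq> 0"
  shows "subdivision_vertex (faces_equiv gs) P \<longleftrightarrow> dim (face_directions P gs) + 1 = CARD('n)"
proof
  assume "dim (face_directions P gs) + 1 = CARD('n)"
  moreover have "P \<noteq> 0" using sp by (auto simp: strictly_positive_def)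
  ultimately have "closure (equiv_class (faces_equiv gs) P) = {t *\<^sub>R P | t. 0 \<le> t}"
    using equiv_class_eq_open_ray[of P gs k\<^sub>0 \<nu>\<^sub>0, OF sp g] closure_open_ray by simp
  with \<open>P \<noteq> 0\<close> show "subdivision_vertex (faces_equiv gs) P"
    using strictly_positive_imp_nonneg_weight[OF sp] unfolding subdivision_vertex_def by blast
qed (rule subdivision_vertex_imp_dim_face_directions[of P gs k\<^sub>0 \<nu>\<^sub>0, OF sp g])

lemma convex_hull_diff_in_span:
  assumes "e \<in> E" "u \<in> convex hull E" "\<And>x. x \<in> E \<Longrightarrow> x - e \<in> T"
  shows "u - e \<in> span T"
proof -
  obtain v where v: "u = e + v" "v \<in> span ((+) (- e) ` (E - {e}))"
    using assms(1,2) convex_hull_subset_affine_hull affine_hull_span2 by blast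
  have "(+) (- e) ` (E - {e}) \<subseteq> T" using assms(3) by auto
  hence "v \<in> span T" using span_mono v(2) by blast
  thus ?thesis using v(1) by simp
qed

lemma sum_fun_upd_UNIV:
  fixes e :: "'k::finite \<Rightarrow> 'a::ab_group_add"
  shows "(\<Sum>j\<in>UNIV. (e(k := z)) j) = (\<Sum>j\<in>UNIV. e j) + (z - e k)"
proof -
  have "(\<Sum>j\<in>UNIV. (e(k := z)) j) = z + (\<Sum>j\<in>UNIV - {k}. e j)"
    by (simp add: sum.remove[of UNIV k])
  also have "\<dots> = (\<Sum>j\<in>UNIV. e j) + (z - e k)"
    by (simp add: sum.remove[of UNIV k])
  finally show ?thesis .
qed

lemma aff_dim_sum_convex_hulls:
  fixes E :: "'k::finite \<Rightarrow> 'a::euclidean_space set"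
  assumes "\<And>k. E k \<noteq> {}"
  shows "aff_dim {\<Sum>k\<in>UNIV. y k | y. \<forall>k. y k \<in> convex hull E k}
           = int (dim (\<Union>k. {a - b | a b. a \<in> E k \<and> b \<in> E k}))"
proof -
  define M where "M = {\<Sum>k\<in>UNIV. y k | y. \<forall>k. y k \<in> convex hull E k}"
  define D where "D = (\<Union>k. {a - b | a b. a \<in> E k \<and> b \<in> E k})"
  define e where "e k = (SOME x. x \<in> E k)" for k
  have e: "e k \<in> E k" for k using assms[of k] by (simp add: e_def some_in_eq)
  define a\<^sub>0 where "a\<^sub>0 = (\<Sum>k\<in>UNIV. e k)"
  have "a\<^sub>0 \<in> M" unfolding M_def a\<^sub>0_def using e by (blast intro: hull_inc)
  hence "aff_dim M = int (dim ((\<lambda>x. x - a\<^sub>0) ` M))"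
    by (intro aff_dim_eq_dim_subtract) (simp add: hull_inc)
  moreover have "span ((\<lambda>x. x - a\<^sub>0) ` M) = span D"
  proof (rule span_eq[THEN iffD2], intro conjI subsetI)
    fix u assume "u \<in> (\<lambda>x. x - a\<^sub>0) ` M"
    then obtain y where y: "u = (\<Sum>k\<in>UNIV. y k) - a\<^sub>0" "\<And>k. y k \<in> convex hull E k"
      unfolding M_def by blast
    have "y k - e k \<in> span D" for k
      by (rule convex_hull_diff_in_span[OF e y(2)]) (use e in \<open>force simp: D_def\<close>)
    hence "(\<Sum>k\<in>UNIV. y k - e k) \<in> span D" by (intro span_sum)
    thus "u \<in> span D" using y(1) by (simp add: a\<^sub>0_def sum_subtractf)
  next
    fix w assume "w \<in> D"
    then obtain k a b where ab: "w = a - b" "a \<in> E k" "b \<in> E k" unfolding D_def by blast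
    have "z - e k \<in> (\<lambda>x. x - a\<^sub>0) ` M" if "z \<in> E k" for z
    proof -
      have "(\<Sum>j\<in>UNIV. (e(k := z)) j) \<in> M"
        unfolding M_def using that e by (auto intro!: exI[of _ "e(k := z)"] hull_inc)
      moreover have "z - e k = (\<Sum>j\<in>UNIV. (e(k := z)) j) - a\<^sub>0"
        unfolding sum_fun_upd_UNIV a\<^sub>0_def by simp
      ultimately show ?thesis by blast
    qed
    hence "(a - e k) - (b - e k) \<in> span ((\<lambda>x. x - a\<^sub>0) ` M)"
      using ab by (intro span_diff span_base)
    thus "w \<in> span ((\<lambda>x. x - a\<^sub>0) ` M)" using ab by simp
  qed
  hence "dim ((\<lambda>x. x - a\<^sub>0) ` M) = dim D" by (metis dim_span)
  ultimately show ?thesis unfolding M_def D_def by simp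
qed

lemma aff_dim_sum_faces:
  fixes gs :: "'k::finite \<Rightarrow> ('n::finite) pseries"
  assumes sp: "strictly_positive P" and "\<And>k. gs k \<noteq> (\<lambda>_. 0)"
  shows "aff_dim {\<Sum>k\<in>UNIV. y k | y. \<forall>k. y k \<in> face P (gs k)} = int (dim (face_directions P gs))"
proof -
  have "face_directions P gs
      = (\<Union>k. {a - b | a b. a \<in> expo ` min_support P (gs k) \<and> b \<in> expo ` min_support P (gs k)})"
    unfolding face_directions_def by blast
  moreover have "expo ` min_support P (gs k) \<noteq> {}" for k
    using min_support_nonempty[OF sp] assms(2)[of k] by fastforce
  ultimately show ?thesis
    unfolding face_strictly_positive[OF sp] by (simp add: aff_dim_sum_convex_hulls)
qed

lemma weight_equiv_eq_faces_equiv: "weight_equiv f = faces_equiv (\<lambda>_::unit. f)"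
  by (simp add: fun_eq_iff weight_equiv_def faces_equiv_def)

lemma subdivision_vertex_weight_equiv_iff:
  fixes f :: "('n::finite) pseries"
  assumes "strictly_positive P" "f \<noteq> (\<lambda>_. 0)"
  shows "subdivision_vertex (weight_equiv f) P \<longleftrightarrow> aff_dim (face P f) = int CARD('n) - 1"
proof -
  obtain \<nu>\<^sub>0 where "f \<nu>\<^sub>0 \<noteq> 0" using assms(2) by auto
  have "face P f = {\<Sum>k\<in>UNIV. y k | y. \<forall>k::unit. y k \<in> face P f}"
  proof (intro set_eqI iffI)
    fix x assume "x \<in> face P f"
    thus "x \<in> {\<Sum>k\<in>UNIV. y k | y. \<forall>k::unit. y k \<in> face P f}"
      by (intro CollectI exI[of _ "\<lambda>_. x"]) (simp add: UNIV_unit)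
  qed (auto simp: UNIV_unit)
  hence "aff_dim (face P f) = int (dim (face_directions P (\<lambda>_::unit. f)))"
    using aff_dim_sum_faces[OF assms(1), of "\<lambda>_::unit. f"] assms(2) by simp
  thus ?thesis
    using subdivision_vertex_faces_equiv_iff[OF assms(1), of "\<lambda>_::unit. f", OF \<open>f \<nu>\<^sub>0 \<noteq> 0\<close>]
    by (simp add: weight_equiv_eq_faces_equiv) linarith
qed

definition jacobian_family :: "('n::finite) pseries \<Rightarrow> 'n option \<Rightarrow> 'n pseries" where
  "jacobian_family f k = (case k of None \<Rightarrow> f | Some i \<Rightarrow> pderiv_ps i f)"

lemma jacobian_equiv_eq_faces_equiv: "jacobian_equiv f = faces_equiv (jacobian_family f)"
  by (auto simp: fun_eq_iff jacobian_equiv_def faces_equiv_def jacobian_family_def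
      split: option.split)

lemma jacobian_face_sum_eq_sum_faces:
  "jacobian_face_sum P f = {\<Sum>k\<in>UNIV. y k | y. \<forall>k. y k \<in> face P (jacobian_family f k)}"
proof -
  have sum_option: "(\<Sum>k\<in>UNIV. y k) = y None + (\<Sum>i\<in>UNIV. y (Some i))" for y :: "'a option \<Rightarrow> real^'a"
    by (simp add: UNIV_option_conv sum.reindex)
  show ?thesis
  proof (intro set_eqI iffI)
    fix u assume "u \<in> jacobian_face_sum P f"
    then obtain x y where "u = x + (\<Sum>i\<in>UNIV. y i)" "x \<in> face P f" "\<forall>i. y i \<in> face P (pderiv_ps i f)"
      unfolding jacobian_face_sum_def by blast
    thus "u \<in> {\<Sum>k\<in>UNIV. y k | y. \<forall>k. y k \<in> face P (jacobian_family f k)}"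
      by (intro CollectI exI[of _ "case_option x y"])
         (auto simp: sum_option jacobian_family_def split: option.split)
  next
    fix u assume "u \<in> {\<Sum>k\<in>UNIV. y k | y. \<forall>k. y k \<in> face P (jacobian_family f k)}"
    then obtain y where u: "u = (\<Sum>k\<in>UNIV. y k)" and y: "\<forall>k. y k \<in> face P (jacobian_family f k)"
      by blast
    have "y None \<in> face P f" using spec[OF y, of None] by (simp add: jacobian_family_def)
    moreover have "y (Some i) \<in> face P (pderiv_ps i f)" for i
      using spec[OF y, of "Some i"] by (simp add: jacobian_family_def)
    ultimately show "u \<in> jacobian_face_sum P f"
      unfolding jacobian_face_sum_def u sum_option by blast
  qed
qed

lemma support_of_pderiv_ps_zero:
  assumes "pderiv_ps i f = (\<lambda>_. 0)" "f \<nu> \<noteq> 0"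
  shows "\<nu> i = 0"
  using pderiv_ps_fun_upd_pred[of \<nu> i f] assms by (auto simp: fun_eq_iff)

lemma support_jacobian_family:
  assumes fi: "pderiv_ps i f = (\<lambda>_. 0)" and "jacobian_family f k a \<noteq> 0"
  shows "a i = 0"
proof (cases k)
  case None thus ?thesis using assms support_of_pderiv_ps_zero[OF fi]
    by (simp add: jacobian_family_def)
next
  case (Some j)
  hence "f (a(j := a j + 1)) \<noteq> 0" using assms(2) by (simp add: jacobian_family_def pderiv_ps_def)
  moreover have "j \<noteq> i" using assms Some by (auto simp: jacobian_family_def)
  ultimately show ?thesis using support_of_pderiv_ps_zero[OF fi] by fastforce
qed

lemma dim_face_directions_jacobian_le:
  fixes f :: "('n::finite) pseries"
  assumes sp: "strictly_positive P" and "f \<nu>\<^sub>0 \<noteq> 0" "f (\<lambda>_. 0) = 0"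
    and fi: "pderiv_ps i f = (\<lambda>_. 0)"
  shows "dim (face_directions P (jacobian_family f)) + 2 \<le> CARD('n)"
proof -
  define G where "G = face_directions P (jacobian_family f)"
  have "x \<bullet> axis i 1 = 0" if x: "x \<in> G" for x
  proof -
    obtain k a b where x_eq: "x = expo a - expo b"
        and "a \<in> min_support P (jacobian_family f k)" "b \<in> min_support P (jacobian_family f k)"
      using x unfolding G_def face_directions_def by blast
    hence "a i = 0" "b i = 0" using support_jacobian_family[OF fi] by (auto simp: min_support_def)
    thus ?thesis by (simp add: x_eq cart_eq_inner_axis[symmetric] expo_def)
  qed
  moreover have "x \<bullet> P = 0" if "x \<in> G" for x
    using inner_face_directions[of P P, OF sp refl] that inner_commute[of x P] by (simp add: G_def)
  ultimately have "dim G + dim {axis i 1, P} \<le> CARD('n)"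
    by (intro dim_add_le_of_orthogonal) auto
  moreover have "axis i 1 \<notin> span {P}"
  proof
    assume "axis i 1 \<in> span {P}"
    then obtain c where c: "axis i 1 = c *\<^sub>R P" by (auto simp: span_singleton)
    have "\<nu>\<^sub>0 \<noteq> (\<lambda>_. 0)" using assms(2,3) by auto
    then obtain j where "\<nu>\<^sub>0 j \<noteq> 0" by (auto simp: fun_eq_iff)
    hence "j \<noteq> i" using support_of_pderiv_ps_zero[OF fi assms(2)] by auto
    hence "c * P$j = 0" using arg_cong[OF c, of "\<lambda>v. v $ j"] by (simp add: axis_def)
    hence "c = 0" using sp by (simp add: strictly_positive_def less_imp_neq[symmetric])
    thus False using c by (simp add: axis_eq_0_iff)
  qed
  moreover have "P \<noteq> 0" using sp by (auto simp: strictly_positive_def)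
  ultimately show ?thesis unfolding G_def by (simp add: dim_pair)
qed

lemma subdivision_vertex_jacobian_equiv_iff:
  fixes f :: "('n::finite) pseries"
  assumes sp: "strictly_positive P" and "f \<noteq> (\<lambda>_. 0)" "f (\<lambda>_. 0) = 0"
  shows "subdivision_vertex (jacobian_equiv f) P
    \<longleftrightarrow> aff_dim (jacobian_face_sum P f) = int CARD('n) - 1"
proof -
  obtain \<nu>\<^sub>0 where f_\<nu>\<^sub>0: "f \<nu>\<^sub>0 \<noteq> 0" using assms(2) by auto
  have vertex_iff: "subdivision_vertex (jacobian_equiv f) P
      \<longleftrightarrow> dim (face_directions P (jacobian_family f)) + 1 = CARD('n)"
    using subdivision_vertex_faces_equiv_iff[OF sp, of "jacobian_family f" None \<nu>\<^sub>0] f_\<nu>\<^sub>0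
    by (simp add: jacobian_equiv_eq_faces_equiv jacobian_family_def)
  show ?thesis
  proof (cases "\<exists>i. pderiv_ps i f = (\<lambda>_. 0)")
    case True
    then obtain i where fi: "pderiv_ps i f = (\<lambda>_. 0)" by blast
    hence "face P (pderiv_ps i f) = {}" by (simp add: face_zero_series)
    hence "jacobian_face_sum P f = {}" unfolding jacobian_face_sum_def by blast
    thus ?thesis using vertex_iff dim_face_directions_jacobian_le[OF sp f_\<nu>\<^sub>0 assms(3) fi] by simp
  next
    case False
    hence "jacobian_family f k \<noteq> (\<lambda>_. 0)" for k
      using assms(2) by (simp add: jacobian_family_def split: option.split)
    thus ?thesis
      using vertex_iff aff_dim_sum_faces[OF sp, of "jacobian_family f"]
      by (simp add: jacobian_face_sum_eq_sum_faces) linarith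
  qed
qed

theorem proposition7:
  fixes f :: "('n::finite \<Rightarrow> nat) \<Rightarrow> complex"
  assumes conv: "convergent_ps f"
    and f0: "f (\<lambda>_. 0) = 0"
  shows "(\<forall>P Q. nonneg_weight P \<and> nonneg_weight Q \<longrightarrow>
            (jacobian_equiv f P Q \<longrightarrow> weight_equiv f P Q) \<and>
            (weight_equiv f P Q \<and> (\<forall>i. \<exists>\<nu>. face_fun P f \<nu> \<noteq> 0 \<and> 0 < \<nu> i)
               \<longrightarrow> jacobian_equiv f P Q))
       \<and> (f \<noteq> (\<lambda>_. 0) \<longrightarrow> (\<forall>P. strictly_positive P \<longrightarrow>
            (subdivision_vertex (weight_equiv f) P \<longleftrightarrow>
               aff_dim (face P f) = int CARD('n) - 1) \<and>
            (subdivision_vertex (jacobian_equiv f) P \<longleftrightarrow>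
               aff_dim (jacobian_face_sum P f) = int CARD('n) - 1)))"
proof -
  have "jacobian_equiv f P Q \<Longrightarrow> weight_equiv f P Q" for P Q
    by (simp add: jacobian_equiv_def weight_equiv_def)
  moreover have
    "(subdivision_vertex (weight_equiv f) P \<longleftrightarrow> aff_dim (face P f) = int CARD('n) - 1) \<and>
      (subdivision_vertex (jacobian_equiv f) P
        \<longleftrightarrow> aff_dim (jacobian_face_sum P f) = int CARD('n) - 1)"
    if "f \<noteq> (\<lambda>_. 0)" "strictly_positive P" for P
    using subdivision_vertex_weight_equiv_iff[OF that(2,1)]
      subdivision_vertex_jacobian_equiv_iff[OF that(2,1) f0] by blast
  ultimately show ?thesis using weight_equiv_imp_jacobian_equiv by blast
qed

end
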